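(* Let $n\ge2$, $\lambda_0\in\mathbb D\setminus\{0\}$, $y^0=(y_1^0,\dots,y_{n-1}^0,q^0)\in\widetilde{\mathbb G}_n$, and $j\in\{1,\dots,[n/2]\}$. Suppose $y^0_jy^0_{n-j}\ne\binom nj^2q^0$, $|y^0_{n-j}|\le|y^0_j|$ and $\|\Phi_j(\cdot,y^0)\|_{H^\infty}\le|\lambda_0|$. Let $w_j\in\mathbb C$ satisfy $w_j^2=\frac{y^0_jy^0_{n-j}-\binom nj^2q^0}{\binom nj^2\lambda_0}$ and let $Z_j=\begin{bmatrix}\frac{y^0_j}{\binom nj\lambda_0}&w_j\\ w_j&\frac{y^0_{n-j}}{\binom nj}\end{bmatrix}$. Then $\|Z_j\|\le1$, and $\|Z_j\|=1$ if and only if $\|\Phi_j(\cdot,y^0)\|_{H^\infty}=|\lambda_0|$.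
   Context: $\mathbb D$ open unit disc, $\|\cdot\|$ operator norm. $\widetilde{\mathbb G}_n=\{(y_1,\dots,y_{n-1},q)\in\mathbb C^n: q\in\mathbb D,\ y_j=\beta_j+\bar\beta_{n-j}q$ with $\beta_j\in\mathbb C$, $|\beta_j|+|\beta_{n-j}|<\binom nj$, $j=1,\dots,n-1\}$. For $y=(y_1,\dots,y_{n-1},q)$, $z\in\mathbb C$: $\Phi_j(z,y)=\frac{\binom nj qz-y_j}{y_{n-j}z-\binom nj}$ if $y_{n-j}z\ne\binom nj$ and $y_jy_{n-j}\ne\binom nj^2q$, and $\Phi_j(z,y)=y_j/\binom nj$ if $y_jy_{n-j}=\binom nj^2q$; $\|\Phi_j(\cdot,y)\|_{H^\infty}=\sup_{z\in\mathbb D}|\Phi_j(z,y)|$. *)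

theory Defs
  imports "HOL-Analysis.Analysis"
begin

text \<open>A point of \<open>\<complex>^n\<close> is written \<open>(y_1,...,y_{n-1},q)\<close>; we represent it by a
  function \<open>y :: nat \<Rightarrow> complex\<close> (only the values \<open>y 1, ..., y (n-1)\<close> matter)
  together with the last coordinate \<open>q\<close>.\<close>

definition in_Gtilde :: "nat \<Rightarrow> (nat \<Rightarrow> complex) \<Rightarrow> complex \<Rightarrow> bool" where
  "in_Gtilde n y q \<longleftrightarrow> norm q < 1 \<and>
     (\<exists>\<beta> :: nat \<Rightarrow> complex. \<forall>j\<in>{1..n-1}.
        y j = \<beta> j + cnj (\<beta> (n - j)) * q \<and>
        norm (\<beta> j) + norm (\<beta> (n - j)) < real (n choose j))"

definition Phi :: "nat \<Rightarrow> nat \<Rightarrow> complex \<Rightarrow> (nat \<Rightarrow> complex) \<Rightarrow> complex \<Rightarrow> complex" where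
  "Phi n j z y q =
     (if y j * y (n - j) = of_nat (n choose j) ^ 2 * q
      then y j / of_nat (n choose j)
      else (of_nat (n choose j) * q * z - y j) / (y (n - j) * z - of_nat (n choose j)))"

definition Phi_Hinf_norm :: "nat \<Rightarrow> nat \<Rightarrow> (nat \<Rightarrow> complex) \<Rightarrow> complex \<Rightarrow> real" where
  "Phi_Hinf_norm n j y q = (SUP z\<in>ball (0::complex) 1. norm (Phi n j z y q))"

definition mat_opnorm :: "complex^'n^'m \<Rightarrow> real" where
  "mat_opnorm A = onorm (\<lambda>v. A *v v)"

definition mat2 :: "complex \<Rightarrow> complex \<Rightarrow> complex \<Rightarrow> complex \<Rightarrow> complex^2^2" where
  "mat2 a b c d = (\<chi> i k. if i = 1 then (if k = 1 then a else b) else (if k = 1 then c else d))"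

end

theory Submission
  imports Defs
begin

text \<open>Dividing by \<open>binom n j\<close>, \<open>\<Phi>\<^sub>j(\<cdot>,y)\<close> becomes \<open>z \<mapsto> (q z - \<alpha>)/(\<beta> z - 1)\<close> with
  \<open>|\<beta>| < 1\<close>. Composing with the disc automorphism \<open>z \<mapsto> (z - \<beta>\<^sup>*)/(1 - \<beta> z)\<close> writes it
  as \<open>C + W v\<close>, so its \<open>H\<^sup>\<infinity>\<close> norm is \<open>|C| + |W| = (|\<alpha> - \<beta>\<^sup>* q| + |\<alpha>\<beta> - q|)/(1 - |\<beta>|\<^sup>2)\<close>.
  A \<open>2\<times>2\<close> matrix with squared Frobenius norm \<open>S\<close> and squared modulus of determinant \<open>D \<le> 1\<close>
  is a contraction iff \<open>1 - S + D \<ge> 0\<close>, with norm exactly \<open>1\<close> iff \<open>1 - S + D = 0\<close>.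
  For \<open>Z\<^sub>j\<close> and \<open>L = |\<lambda>\<^sub>0|\<close> one has
  \<open>L\<^sup>2 (1 - S + D) = L\<^sup>2 (1 - |\<beta>|\<^sup>2) - 2 L |\<alpha>\<beta> - q| - (|\<alpha>|\<^sup>2 - |q|\<^sup>2)\<close>, and the identity
  \<open>|\<alpha> - \<beta>\<^sup>* q|\<^sup>2 - |\<alpha>\<beta> - q|\<^sup>2 = (|\<alpha>|\<^sup>2 - |q|\<^sup>2)(1 - |\<beta>|\<^sup>2)\<close> turns \<open>\<parallel>\<Phi>\<^sub>j\<parallel> \<le> L\<close> into the
  nonnegativity of this quantity, with equality exactly when \<open>\<parallel>\<Phi>\<^sub>j\<parallel> = L\<close>.\<close>

lemma norm_vec2_square: "(norm (v::complex^2))^2 = (norm (v$1))^2 + (norm (v$2))^2"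
  by (simp add: norm_vec_def L2_set_def sum_2)

lemma norm_mat2_mult_square:
  "(norm (mat2 a b c d *v v))^2 =
     ((norm a)^2 + (norm c)^2) * (norm (v$1))^2 + ((norm b)^2 + (norm d)^2) * (norm (v$2))^2
     + 2 * Re ((cnj a * b + cnj c * d) * cnj (v$1) * v$2)"
proof -
  have "mat2 a b c d *v v = (\<chi> i. if i = 1 then a * v$1 + b * v$2 else c * v$1 + d * v$2)"
    by (simp add: mat2_def matrix_vector_mult_def sum_2 vec_eq_iff)
  then show ?thesis
    unfolding norm_vec2_square cmod_power2 by (simp add: power2_eq_square algebra_simps)
qed

lemma gram_det_mat2:
  fixes a b c d :: complex
  shows "((norm a)^2 + (norm c)^2) * ((norm b)^2 + (norm d)^2) - (norm (cnj a * b + cnj c * d))^2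
     = (norm (a*d - b*c))^2"
  unfolding cmod_power2 by (simp add: power2_eq_square algebra_simps)

lemma two_mult_le_quadratic_form:
  fixes A B m x y :: real
  assumes "A \<ge> 0" "B \<ge> 0" "m^2 \<le> A * B" "m \<ge> 0" "x \<ge> 0" "y \<ge> 0"
  shows "2 * m * x * y \<le> A * x^2 + B * y^2"
proof (cases "A = 0")
  case True
  then show ?thesis using assms by simp
next
  case False
  have "A * (A * x^2 + B * y^2 - 2 * m * x * y) = (A*x - m*y)^2 + (A*B - m^2) * y^2"
    by (simp add: power2_eq_square algebra_simps)
  also have "\<dots> \<ge> 0" using assms by simp
  finally show ?thesis using False assms(1) by (simp add: zero_le_mult_iff)
qed

text \<open>The squares of the singular values of \<open>mat2 a b c d\<close> are the roots of
  \<open>k\<^sup>2 - S k + D\<close>, with \<open>S\<close> the squared Frobenius norm and \<open>D\<close> the squared modulus of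
  the determinant; \<open>k\<close> bounds the larger one iff \<open>S \<le> 2 k\<close> and \<open>k\<^sup>2 - S k + D \<ge> 0\<close>.\<close>

lemma norm_mat2_mult_square_le:
  fixes a b c d :: complex and k :: real
  defines "S \<equiv> (norm a)^2 + (norm b)^2 + (norm c)^2 + (norm d)^2"
    and "D \<equiv> (norm (a*d - b*c))^2"
  assumes "S \<le> 2*k" and "k^2 - S * k + D \<ge> 0"
  shows "(norm (mat2 a b c d *v v))^2 \<le> k * (norm v)^2"
proof -
  define g where "g = cnj a * b + cnj c * d"
  define A where "A = k - ((norm a)^2 + (norm c)^2)"
  define B where "B = k - ((norm b)^2 + (norm d)^2)"
  have AB: "(norm g)^2 \<le> A * B"
    using assms(4) gram_det_mat2[of a c b d]
    unfolding A_def B_def g_def S_def D_def by (simp add: algebra_simps power2_eq_square)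
  moreover have "A + B \<ge> 0" using assms(3) unfolding A_def B_def S_def by simp
  moreover have "A * B \<ge> 0" using AB by (meson order_trans zero_le_power2)
  ultimately have A0: "A \<ge> 0" and B0: "B \<ge> 0" by (auto simp: zero_le_mult_iff)
  have "Re (g * cnj (v$1) * v$2) \<le> norm g * norm (v$1) * norm (v$2)"
    by (metis complex_Re_le_cmod complex_mod_cnj norm_mult)
  moreover have "2 * norm g * norm (v$1) * norm (v$2) \<le> A * (norm (v$1))^2 + B * (norm (v$2))^2"
    by (rule two_mult_le_quadratic_form[OF A0 B0 AB]) auto
  ultimately show ?thesis
    unfolding norm_mat2_mult_square g_def[symmetric] unfolding norm_vec2_square A_def B_def
    by (simp add: algebra_simps)
qed

lemma mat_opnorm_mat2_le_sqrt:
  fixes a b c d :: complex and k :: real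
  assumes "(norm a)^2 + (norm b)^2 + (norm c)^2 + (norm d)^2 \<le> 2*k"
    and "k^2 - ((norm a)^2 + (norm b)^2 + (norm c)^2 + (norm d)^2) * k + (norm (a*d - b*c))^2 \<ge> 0"
  shows "mat_opnorm (mat2 a b c d) \<le> sqrt k"
  unfolding mat_opnorm_def
proof (rule onorm_le)
  fix v :: "complex^2"
  have "(norm (mat2 a b c d *v v))^2 \<le> k * (norm v)^2"
    by (rule norm_mat2_mult_square_le[OF assms])
  then have "sqrt ((norm (mat2 a b c d *v v))^2) \<le> sqrt (k * (norm v)^2)"
    using real_sqrt_le_mono by blast
  then show "norm (mat2 a b c d *v v) \<le> sqrt k * norm v"
    by (simp add: real_sqrt_mult)
qed

lemma mat_opnorm_mat2_less_1:
  fixes a b c d :: complex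
  defines "S \<equiv> (norm a)^2 + (norm b)^2 + (norm c)^2 + (norm d)^2"
    and "D \<equiv> (norm (a*d - b*c))^2"
  assumes "D \<le> 1" and "1 - S + D > 0"
  shows "mat_opnorm (mat2 a b c d) < 1"
proof -
  define k where "k = 1 - (1 - S + D)/2"
  have S0: "S \<ge> 0" unfolding S_def by simp
  have kS: "S \<le> 2*k" using assms(3) unfolding k_def by (simp add: field_simps)
  have k0: "0 \<le> k" using assms(3) S0 unfolding k_def by (simp add: field_simps)
  have k1: "k < 1" using assms(4) unfolding k_def by (simp add: field_simps)
  have "k^2 - S * k + D = (1 - S + D) * ((1 - S + D)/4 + S/2)"
    unfolding k_def by (simp add: algebra_simps power2_eq_square)
  also have "\<dots> \<ge> 0" using assms(4) S0 by simp
  finally have "k^2 - S * k + D \<ge> 0" .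
  then have "mat_opnorm (mat2 a b c d) \<le> sqrt k"
    using mat_opnorm_mat2_le_sqrt kS unfolding S_def D_def by simp
  also have "sqrt k < 1" using k0 k1 by simp
  finally show ?thesis .
qed

lemma ex_mat2_mult_norm_eq:
  fixes a b c d :: complex
  assumes "1 - ((norm a)^2 + (norm b)^2 + (norm c)^2 + (norm d)^2) + (norm (a*d - b*c))^2 = 0"
  shows "\<exists>v. v \<noteq> 0 \<and> norm (mat2 a b c d *v v) = norm v"
proof -
  define g where "g = cnj a * b + cnj c * d"
  define A where "A = 1 - ((norm a)^2 + (norm c)^2)"
  define B where "B = 1 - ((norm b)^2 + (norm d)^2)"
  have AB: "A * B = (norm g)^2"
    using assms gram_det_mat2[of a c b d]
    unfolding A_def B_def g_def by (simp add: algebra_simps power2_eq_square)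
  define v :: "complex^2" where
    "v = (if A = 0 then (\<chi> i. if i = 1 then 1 else 0) else (\<chi> i. if i = 1 then g / of_real A else 1))"
  have "v$1 \<noteq> 0 \<or> v$2 \<noteq> 0" unfolding v_def by simp
  then have "v \<noteq> 0" by auto
  moreover have "(norm (mat2 a b c d *v v))^2 = (norm v)^2"
  proof (cases "A = 0")
    case True
    then show ?thesis unfolding norm_mat2_mult_square unfolding norm_vec2_square v_def A_def by simp
  next
    case False
    then have v: "v$1 = g / of_real A" "v$2 = 1" by (simp_all add: v_def)
    have "g * cnj (g / of_real A) = of_real ((norm g)^2 / A)"
      by (simp add: complex_norm_square[symmetric])
    then have re: "Re (g * cnj (v$1) * v$2) = (norm g)^2 / A" unfolding v by (metis Re_complex_of_real mult_1_right)
    have n1: "(norm (v$1))^2 = (norm g)^2 / A^2" unfolding v by (simp add: norm_divide power_divide)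
    have "(norm (mat2 a b c d *v v))^2 - (norm v)^2
        = (1 - A) * ((norm g)^2 / A^2) + (1 - B) + 2 * ((norm g)^2 / A) - ((norm g)^2 / A^2 + 1)"
      unfolding norm_mat2_mult_square g_def[symmetric] unfolding norm_vec2_square re n1 unfolding v(2)
      by (simp add: A_def B_def)
    also have "\<dots> = ((norm g)^2 - A * B) / A"
      using False by (simp add: field_simps power2_eq_square)
    finally show ?thesis using AB by simp
  qed
  then have "norm (mat2 a b c d *v v) = norm v" by simp
  ultimately show ?thesis by blast
qed

lemma mat_opnorm_mat2_ge_1:
  fixes a b c d :: complex
  assumes "1 - ((norm a)^2 + (norm b)^2 + (norm c)^2 + (norm d)^2) + (norm (a*d - b*c))^2 = 0"
  shows "mat_opnorm (mat2 a b c d) \<ge> 1"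
proof -
  obtain v where v: "v \<noteq> 0" "norm (mat2 a b c d *v v) = norm v"
    using ex_mat2_mult_norm_eq[OF assms] by blast
  have "norm (mat2 a b c d *v v) \<le> mat_opnorm (mat2 a b c d) * norm v"
    unfolding mat_opnorm_def by (rule onorm) simp
  then show ?thesis using v by simp
qed

lemma mat_opnorm_mat2_le_1_iff:
  fixes a b c d :: complex
  defines "S \<equiv> (norm a)^2 + (norm b)^2 + (norm c)^2 + (norm d)^2"
    and "D \<equiv> (norm (a*d - b*c))^2"
  assumes "D \<le> 1" and "1 - S + D \<ge> 0"
  shows "mat_opnorm (mat2 a b c d) \<le> 1 \<and> (mat_opnorm (mat2 a b c d) = 1 \<longleftrightarrow> 1 - S + D = 0)"
proof -
  have "mat_opnorm (mat2 a b c d) \<le> sqrt 1"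
    by (rule mat_opnorm_mat2_le_sqrt) (use assms in \<open>simp_all add: field_simps\<close>)
  moreover have "mat_opnorm (mat2 a b c d) < 1" if "1 - S + D \<noteq> 0"
    using mat_opnorm_mat2_less_1 assms that unfolding S_def D_def by simp
  moreover have "mat_opnorm (mat2 a b c d) \<ge> 1" if "1 - S + D = 0"
    using mat_opnorm_mat2_ge_1 that unfolding S_def D_def by simp
  ultimately show ?thesis by fastforce
qed

lemma norm_moebius_identity:
  fixes b z :: complex
  shows "(norm (1 - b*z))^2 - (norm (z - cnj b))^2 = (1 - (norm z)^2) * (1 - (norm b)^2)"
  unfolding cmod_power2 by (simp add: power2_eq_square algebra_simps)

lemma moebius_in_ball:
  fixes b z :: complex
  assumes "norm b < 1" "norm z < 1"
  shows "b * z \<noteq> 1" and "norm ((z - cnj b) / (1 - b*z)) < 1"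
proof -
  have "(norm (1 - b*z))^2 - (norm (z - cnj b))^2 > 0"
    unfolding norm_moebius_identity using assms by (simp add: abs_square_less_1)
  then have lt: "norm (z - cnj b) < norm (1 - b*z)"
    by (simp add: power_less_imp_less_base)
  then show "b * z \<noteq> 1" by auto
  show "norm ((z - cnj b) / (1 - b*z)) < 1"
    using lt by (simp add: norm_divide divide_less_eq)
qed

lemma moebius_image_ball:
  fixes b :: complex
  assumes "norm b < 1"
  shows "(\<lambda>z. (z - cnj b) / (1 - b*z)) ` ball 0 1 = ball 0 1"
proof
  show "(\<lambda>z. (z - cnj b) / (1 - b*z)) ` ball 0 1 \<subseteq> ball 0 1"
    using moebius_in_ball(2)[OF assms] by auto
  show "ball 0 1 \<subseteq> (\<lambda>z. (z - cnj b) / (1 - b*z)) ` ball 0 1"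
  proof
    fix v :: complex assume "v \<in> ball 0 1"
    then have v: "norm v < 1" by simp
    have nb: "norm (-b) < 1" using assms by simp
    define z where "z = (v + cnj b) / (1 + b * v)"
    have den: "1 + b * v \<noteq> 0" using moebius_in_ball(1)[OF nb v] by (auto simp: add_eq_0_iff)
    have z: "norm z < 1" using moebius_in_ball(2)[OF nb v] unfolding z_def by simp
    have "1 - b * cnj b = of_real (1 - (norm b)^2)" by (simp add: complex_norm_square[symmetric])
    moreover have "(norm b)^2 < 1" using assms by (simp add: abs_square_less_1)
    ultimately have "1 - b * cnj b \<noteq> 0" by (metis less_irrefl of_real_eq_0_iff eq_iff_diff_eq_0)
    moreover have "z - cnj b = v * (1 - b * cnj b) / (1 + b * v)"
      unfolding z_def using den by (simp add: field_simps)
    moreover have "1 - b*z = (1 - b * cnj b) / (1 + b * v)"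
      unfolding z_def using den by (simp add: field_simps)
    ultimately have "(z - cnj b) / (1 - b*z) = v" using den by simp
    with z show "v \<in> (\<lambda>z. (z - cnj b) / (1 - b*z)) ` ball 0 1" by force
  qed
qed

lemma SUP_norm_affine_ball:
  fixes C W :: complex
  shows "(SUP v\<in>ball 0 1. norm (C + W * v)) = norm C + norm W"
proof (rule antisym)
  have ub: "norm (C + W * v) \<le> norm C + norm W" if "v \<in> ball 0 1" for v
  proof -
    have "norm (C + W * v) \<le> norm C + norm W * norm v" by (metis norm_mult norm_triangle_ineq)
    also have "\<dots> \<le> norm C + norm W" using that by (simp add: mult_left_le)
    finally show ?thesis .
  qed
  then show "(SUP v\<in>ball 0 1. norm (C + W * v)) \<le> norm C + norm W"
    by (intro cSUP_least) auto
  show "norm C + norm W \<le> (SUP v\<in>ball 0 1. norm (C + W * v))"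
  proof -
    have "s * norm W \<le> (SUP v\<in>ball 0 1. norm (C + W * v)) - norm C" if s: "0 < s" "s < 1" for s
    proof -
      define e where "e = (if C = 0 then 1 else C / of_real (norm C))"
      define g where "g = (if W = 0 then 1 else of_real (norm W) / W)"
      have ne: "norm e = 1" and ng: "norm g = 1" unfolding e_def g_def by (simp_all add: norm_divide)
      have Ce: "C = of_real (norm C) * e" and Wg: "W * g = of_real (norm W)"
        unfolding e_def g_def by simp_all
      define v where "v = of_real s * e * g"
      \<comment> \<open>\<open>v\<close> turns \<open>W v\<close> into the direction of \<open>C\<close>, so the triangle inequality is sharp\<close>
      have "C + W * v = of_real (norm C + s * norm W) * e"
        unfolding v_def by (subst Ce) (simp add: algebra_simps Wg[symmetric])
      then have "norm (C + W * v) = \<bar>norm C + s * norm W\<bar>"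
        by (simp only: norm_mult norm_of_real ne mult_1_right)
      then have "norm (C + W * v) = norm C + s * norm W" using s by simp
      moreover have "v \<in> ball 0 1" using ne ng s by (simp add: v_def norm_mult)
      ultimately have "norm C + s * norm W \<le> (SUP v\<in>ball 0 1. norm (C + W * v))"
        using ub by (metis (no_types, lifting) bdd_aboveI2 cSUP_upper)
      then show ?thesis by simp
    qed
    then have "norm W \<le> (SUP v\<in>ball 0 1. norm (C + W * v)) - norm C"
      by (rule field_le_mult_one_interval)
    then show ?thesis by simp
  qed
qed

lemma linear_fractional_decomp:
  fixes \<alpha> \<beta> q z :: complex
  assumes "1 - \<beta> * cnj \<beta> \<noteq> 0" "\<beta> * z \<noteq> 1"
  shows "(q*z - \<alpha>) / (\<beta>*z - 1) = (\<alpha> - cnj \<beta> * q) / (1 - \<beta> * cnj \<beta>)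
          + (\<alpha>*\<beta> - q) / (1 - \<beta> * cnj \<beta>) * ((z - cnj \<beta>) / (1 - \<beta>*z))"
proof -
  define c where "c = 1 - \<beta> * cnj \<beta>"
  have c: "c \<noteq> 0" and den: "\<beta>*z - 1 \<noteq> 0" using assms unfolding c_def by auto
  have "(q*z - \<alpha>) / (\<beta>*z - 1) = ((q*z - \<alpha>) * c) / (c * (\<beta>*z - 1))"
    using c by simp
  also have "(q*z - \<alpha>) * c = (\<alpha> - cnj \<beta> * q) * (\<beta>*z - 1) + (\<alpha>*\<beta> - q) * (cnj \<beta> - z)"
    unfolding c_def by (simp add: algebra_simps)
  also have "\<dots> / (c * (\<beta>*z - 1)) = (\<alpha> - cnj \<beta> * q) / c + (\<alpha>*\<beta> - q) * (cnj \<beta> - z) / (c * (\<beta>*z - 1))"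
    using c den by (simp add: add_divide_distrib)
  also have "(\<alpha>*\<beta> - q) * (cnj \<beta> - z) / (c * (\<beta>*z - 1)) = (\<alpha>*\<beta> - q) / c * ((z - cnj \<beta>) / (1 - \<beta>*z))"
    by (metis minus_diff_eq minus_divide_divide times_divide_times_eq)
  finally show ?thesis unfolding c_def .
qed

definition Hinf_norm_lf :: "complex \<Rightarrow> complex \<Rightarrow> complex \<Rightarrow> real" where
  "Hinf_norm_lf \<alpha> \<beta> q = (norm (\<alpha> - cnj \<beta> * q) + norm (\<alpha>*\<beta> - q)) / (1 - (norm \<beta>)^2)"

lemma SUP_linear_fractional_ball:
  fixes \<alpha> \<beta> q :: complex
  assumes "norm \<beta> < 1"
  shows "(SUP z\<in>ball 0 1. norm ((q*z - \<alpha>) / (\<beta>*z - 1))) = Hinf_norm_lf \<alpha> \<beta> q"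
proof -
  define t where "t = 1 - (norm \<beta>)^2"
  have t: "t > 0" unfolding t_def using assms by (simp add: abs_square_less_1)
  have tc: "1 - \<beta> * cnj \<beta> = of_real t"
    unfolding t_def by (simp add: complex_norm_square[symmetric])
  define C where "C = (\<alpha> - cnj \<beta> * q) / (1 - \<beta> * cnj \<beta>)"
  define W where "W = (\<alpha>*\<beta> - q) / (1 - \<beta> * cnj \<beta>)"
  define m where "m = (\<lambda>z. (z - cnj \<beta>) / (1 - \<beta>*z))"
  have "norm ((q*z - \<alpha>) / (\<beta>*z - 1)) = norm (C + W * m z)" if "z \<in> ball 0 1" for z
    using linear_fractional_decomp[of \<beta> z q \<alpha>] moebius_in_ball(1)[OF assms, of z] that tc t
    unfolding C_def W_def m_def by simp
  then have "(SUP z\<in>ball 0 1. norm ((q*z - \<alpha>) / (\<beta>*z - 1))) = (SUP v\<in>m ` ball 0 1. norm (C + W * v))"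
    by (simp add: image_image)
  also have "\<dots> = norm C + norm W"
    unfolding m_def moebius_image_ball[OF assms] by (rule SUP_norm_affine_ball)
  also have "\<dots> = Hinf_norm_lf \<alpha> \<beta> q"
    unfolding C_def W_def Hinf_norm_lf_def tc t_def[symmetric] using t
    by (simp add: norm_divide add_divide_distrib)
  finally show ?thesis .
qed

lemma norm_le_of_Hinf_norm_lf_le:
  fixes \<alpha> \<beta> q :: complex and L :: real
  assumes "norm \<beta> < 1" "norm \<beta> \<le> norm \<alpha>" "L \<le> 1" "Hinf_norm_lf \<alpha> \<beta> q \<le> L"
  shows "norm q \<le> L"
proof -
  define B where "B = norm \<beta>"
  have B: "0 \<le> B" "B < 1" using assms(1) unfolding B_def by auto
  have t: "1 - B^2 = (1 + B) * (1 - B)" by (simp add: power2_eq_square algebra_simps)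
  then have "norm (\<alpha> - cnj \<beta> * q) + norm (\<alpha>*\<beta> - q) \<le> L * ((1 + B) * (1 - B))"
    using assms(4) B unfolding Hinf_norm_lf_def B_def[symmetric]
    by (simp add: divide_le_eq mult.commute)
  moreover have "norm \<alpha> - B * norm q \<le> norm (\<alpha> - cnj \<beta> * q)"
    using norm_triangle_ineq2[of \<alpha> "cnj \<beta> * q"] unfolding B_def by (simp add: norm_mult)
  moreover have "norm q - norm \<alpha> * B \<le> norm (\<alpha>*\<beta> - q)"
    using norm_triangle_ineq3[of "\<alpha>*\<beta>" q] unfolding B_def by (simp add: norm_mult)
  ultimately have "(norm \<alpha> + norm q) * (1 - B) \<le> (L * (1 + B)) * (1 - B)"
    by (simp add: algebra_simps)
  then have "norm \<alpha> + norm q \<le> L * (1 + B)" using B by simp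
  moreover have "L * B \<le> norm \<alpha>"
    using mult_right_mono[OF assms(3) B(1)] assms(2) unfolding B_def by simp
  ultimately show ?thesis by (simp add: algebra_simps)
qed

lemma norm_diff_cnj_mult_square:
  fixes \<alpha> \<beta> q :: complex
  shows "(norm (\<alpha> - cnj \<beta> * q))^2 - (norm (\<alpha>*\<beta> - q))^2 = ((norm \<alpha>)^2 - (norm q)^2) * (1 - (norm \<beta>)^2)"
  unfolding cmod_power2 by (simp add: power2_eq_square algebra_simps)

lemma Hinf_norm_lf_le_quadratic:
  fixes \<alpha> \<beta> q :: complex and L :: real
  defines "R \<equiv> norm (\<alpha>*\<beta> - q)" and "t \<equiv> 1 - (norm \<beta>)^2"
  assumes "norm \<beta> < 1" "Hinf_norm_lf \<alpha> \<beta> q \<le> L"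
  shows "(norm \<alpha>)^2 - (norm q)^2 \<le> L^2 * t - 2 * L * R"
    and "(norm \<alpha>)^2 - (norm q)^2 = L^2 * t - 2 * L * R \<longleftrightarrow> Hinf_norm_lf \<alpha> \<beta> q = L"
proof -
  define U where "U = norm (\<alpha> - cnj \<beta> * q)"
  have t: "t > 0" unfolding t_def using assms(3) by (simp add: abs_square_less_1)
  have H: "Hinf_norm_lf \<alpha> \<beta> q = (U + R) / t" unfolding Hinf_norm_lf_def U_def R_def t_def ..
  have UR: "U^2 - R^2 = ((norm \<alpha>)^2 - (norm q)^2) * t"
    unfolding U_def R_def t_def by (rule norm_diff_cnj_mult_square)
  have sq: "(L*t - R)^2 - R^2 = (L^2 * t - 2 * L * R) * t" by (simp add: power2_eq_square algebra_simps)
  have U0: "0 \<le> U" unfolding U_def by simp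
  have ULR: "U \<le> L*t - R" using assms(4) t unfolding H by (simp add: divide_le_eq algebra_simps)
  have "((norm \<alpha>)^2 - (norm q)^2) * t \<le> (L^2 * t - 2 * L * R) * t"
    unfolding UR[symmetric] sq[symmetric] using U0 ULR by (simp add: power_mono)
  then show "(norm \<alpha>)^2 - (norm q)^2 \<le> L^2 * t - 2 * L * R" using t by simp
  have "(norm \<alpha>)^2 - (norm q)^2 = L^2 * t - 2 * L * R
      \<longleftrightarrow> ((norm \<alpha>)^2 - (norm q)^2) * t = (L^2 * t - 2 * L * R) * t" using t by simp
  also have "\<dots> \<longleftrightarrow> U^2 = (L*t - R)^2" unfolding UR[symmetric] sq[symmetric] by simp
  also have "\<dots> \<longleftrightarrow> U = L*t - R" using U0 ULR by simp
  also have "\<dots> \<longleftrightarrow> Hinf_norm_lf \<alpha> \<beta> q = L" unfolding H using t by (auto simp: field_simps)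
  finally show "(norm \<alpha>)^2 - (norm q)^2 = L^2 * t - 2 * L * R \<longleftrightarrow> Hinf_norm_lf \<alpha> \<beta> q = L" .
qed

lemma mat_opnorm_mat2_le_1_Hinf_norm_lf:
  fixes \<alpha> \<beta> q lam w :: complex
  assumes "norm \<beta> < 1" "norm \<beta> \<le> norm \<alpha>" "lam \<noteq> 0" "norm lam \<le> 1"
    and "Hinf_norm_lf \<alpha> \<beta> q \<le> norm lam"
    and "w^2 = (\<alpha>*\<beta> - q) / lam"
  shows "mat_opnorm (mat2 (\<alpha> / lam) w w \<beta>) \<le> 1
       \<and> (mat_opnorm (mat2 (\<alpha> / lam) w w \<beta>) = 1 \<longleftrightarrow> Hinf_norm_lf \<alpha> \<beta> q = norm lam)"
proof -
  define L where "L = norm lam"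
  define R where "R = norm (\<alpha>*\<beta> - q)"
  have L: "L > 0" unfolding L_def using assms(3) by simp
  have S: "(norm (\<alpha> / lam))^2 + (norm w)^2 + (norm w)^2 + (norm \<beta>)^2 = (norm \<alpha>)^2 / L^2 + 2 * R / L + (norm \<beta>)^2"
    using arg_cong[OF assms(6), of norm]
    by (simp add: L_def R_def norm_divide norm_power power_divide)
  have "\<alpha> / lam * \<beta> - w * w = q / lam"
    using assms(3,6) by (simp add: power2_eq_square field_simps)
  then have D: "(norm (\<alpha> / lam * \<beta> - w * w))^2 = (norm q)^2 / L^2"
    by (simp add: L_def norm_divide power_divide)
  have "norm q \<le> L" using norm_le_of_Hinf_norm_lf_le assms unfolding L_def by blast
  then have D1: "(norm q)^2 / L^2 \<le> 1" using L by (simp add: power_mono divide_le_eq)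
  have key: "1 - ((norm \<alpha>)^2 / L^2 + 2 * R / L + (norm \<beta>)^2) + (norm q)^2 / L^2
      = ((L^2 * (1 - (norm \<beta>)^2) - 2 * L * R) - ((norm \<alpha>)^2 - (norm q)^2)) / L^2"
    using L by (simp add: field_simps power2_eq_square)
  note quadratic = Hinf_norm_lf_le_quadratic[OF assms(1,5), folded L_def R_def]
  show ?thesis
    using mat_opnorm_mat2_le_1_iff[where a="\<alpha> / lam" and b=w and c=w and d=\<beta>] quadratic D1 L
    unfolding S D key by (auto simp: L_def)
qed

lemma in_Gtilde_norm_less:
  assumes "in_Gtilde n y q" "k \<in> {1..n-1}"
  shows "norm (y k) < real (n choose k)"
proof -
  obtain \<beta> where \<beta>: "y k = \<beta> k + cnj (\<beta> (n - k)) * q" "norm (\<beta> k) + norm (\<beta> (n - k)) < real (n choose k)"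
    using assms unfolding in_Gtilde_def by blast
  have "norm q < 1" using assms(1) unfolding in_Gtilde_def by simp
  then have "norm (cnj (\<beta> (n - k)) * q) \<le> norm (\<beta> (n - k))" by (simp add: norm_mult mult_left_le)
  then have "norm (y k) \<le> norm (\<beta> k) + norm (\<beta> (n - k))"
    unfolding \<beta>(1) by (meson add_left_mono norm_triangle_ineq order_trans)
  with \<beta>(2) show ?thesis by simp
qed

lemma in_Gtilde_norm_div_binomial_less_1:
  assumes "in_Gtilde n y q" "j \<in> {1..n-1}"
  shows "norm (y (n - j) / of_nat (n choose j)) < 1"
proof -
  have "j \<le> n" using assms(2) by auto
  then have "n choose (n - j) = n choose j" by (rule binomial_symmetric[symmetric])
  moreover have "n - j \<in> {1..n-1}" using assms(2) by auto
  ultimately have "norm (y (n - j)) < real (n choose j)"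
    using in_Gtilde_norm_less[OF assms(1)] by fastforce
  moreover have "n choose j > 0" using \<open>j \<le> n\<close> by simp
  ultimately show ?thesis by (simp add: norm_divide divide_less_eq)
qed

lemma Phi_Hinf_norm_eq_Hinf_norm_lf:
  fixes n j :: nat and c :: complex
  defines "c \<equiv> of_nat (n choose j)"
  assumes "in_Gtilde n y q" "j \<in> {1..n-1}" "y j * y (n - j) \<noteq> c^2 * q"
  shows "Phi_Hinf_norm n j y q = Hinf_norm_lf (y j / c) (y (n - j) / c) q"
proof -
  have c: "c \<noteq> 0" using assms(3) unfolding c_def by auto
  have "Phi n j z y q = (q*z - y j / c) / (y (n - j) / c * z - 1)" for z
  proof -
    have "q*z - y j / c = (c*q*z - y j) / c" "y (n - j) / c * z - 1 = (y (n - j) * z - c) / c"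
      using c by (simp_all add: field_simps)
    then show ?thesis using assms(4) c unfolding Phi_def c_def[symmetric] by simp
  qed
  then show ?thesis
    using SUP_linear_fractional_ball[OF in_Gtilde_norm_div_binomial_less_1[OF assms(2,3)]]
    unfolding Phi_Hinf_norm_def c_def by simp
qed

theorem mainTheorem14:
  fixes n j :: nat and lam0 q0 w :: complex and y0 :: "nat \<Rightarrow> complex"
  assumes "n \<ge> 2"
    and "norm lam0 < 1" and "lam0 \<noteq> 0"
    and "in_Gtilde n y0 q0"
    and "j \<in> {1..n div 2}"
    and "y0 j * y0 (n - j) \<noteq> of_nat (n choose j) ^ 2 * q0"
    and "norm (y0 (n - j)) \<le> norm (y0 j)"
    and "Phi_Hinf_norm n j y0 q0 \<le> norm lam0"
    and "w ^ 2 = (y0 j * y0 (n - j) - of_nat (n choose j) ^ 2 * q0) / (of_nat (n choose j) ^ 2 * lam0)"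
  shows "mat_opnorm (mat2 (y0 j / (of_nat (n choose j) * lam0)) w w (y0 (n - j) / of_nat (n choose j))) \<le> 1
       \<and> (mat_opnorm (mat2 (y0 j / (of_nat (n choose j) * lam0)) w w (y0 (n - j) / of_nat (n choose j))) = 1
            \<longleftrightarrow> Phi_Hinf_norm n j y0 q0 = norm lam0)"
proof -
  define c :: complex where "c = of_nat (n choose j)"
  define \<alpha> where "\<alpha> = y0 j / c"
  define \<beta> where "\<beta> = y0 (n - j) / c"
  have j: "j \<in> {1..n-1}" using assms(1,5) by auto
  then have c: "c \<noteq> 0" unfolding c_def by auto
  have \<beta>: "norm \<beta> < 1"
    unfolding \<beta>_def c_def by (rule in_Gtilde_norm_div_binomial_less_1[OF assms(4) j])
  have \<beta>\<alpha>: "norm \<beta> \<le> norm \<alpha>"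
    using assms(7) by (simp add: \<alpha>_def \<beta>_def norm_divide divide_right_mono)
  have H: "Phi_Hinf_norm n j y0 q0 = Hinf_norm_lf \<alpha> \<beta> q0"
    unfolding \<alpha>_def \<beta>_def c_def using Phi_Hinf_norm_eq_Hinf_norm_lf assms(4,6) j by blast
  have w: "w^2 = (\<alpha>*\<beta> - q0) / lam0"
    using assms(9) c by (simp add: \<alpha>_def \<beta>_def c_def[symmetric] field_simps power2_eq_square)
  have "y0 j / (c * lam0) = \<alpha> / lam0" by (simp add: \<alpha>_def)
  then show ?thesis
    using mat_opnorm_mat2_le_1_Hinf_norm_lf[OF \<beta> \<beta>\<alpha> assms(3) _ _ w] assms(2,8) H
    by (simp add: c_def \<beta>_def)
qed

end
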